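(* Consider a $(1+\varepsilon)$-adversarial sampling process (as in the context) on $k$ elements with $0<\varepsilon<1/2$ and initial weights normalized so that $\sum_{e\in E_0}w_0(e)=k$. Let $\ell_{max}$ be the largest $\ell\in\{1,2,\ldots,\lfloor |S_0|/2\rfloor\}$ that is bad, if such an $\ell$ exists, and $\ell_{max}=1$ otherwise. Then, for every realization of the process and every $i\in\{0,1,\ldots,k-1\}$, \[ \frac{w_i(E_i)}{k-i}\le 90\,\ell_{max}. \]
   Context: The $(1+\varepsilon)$-adversarial sampling process: initially there is a set $E_0$ of $k$ elements with nonnegative weights $w_0$. In round $i$, let $D_i$ be the distribution on $E_i$ with $\Pr_{D_i}(e)=w_i(e)/\sum_{e'\in E_i}w_i(e')$; an adversary chooses any distribution $D_i^\varepsilon$ on $E_i$ with $(1-\varepsilon)\Pr_{D_i}(e)\le\Pr_{D_i^\varepsilon}(e)\le(1+\varepsilon)\Pr_{D_i}(e)$ for all $e$; an element $e_{i+1}$ is sampled from $D_i^\varepsilon$ and $E_{i+1}=E_i\setminus\{e_{i+1}\}$; then the adversary chooses weights $0\le w_{i+1}(e)\le w_i(e)$ for $e\in E_{i+1}$. The adversary's choices may depend on the history. Notation: for $E\subseteq E_i$, $w_i(E)=\sum_{e\in E}w_i(e)$. For each $i$, partition $E_i=B_i\sqcup M_i\sqcup S_i$ where $e\in B_i$ iff $w_i(e)\ge 80$, $e\in M_i$ iff $2<w_i(e)<80$, and $e\in S_i$ iff $w_i(e)\le 2$. For $\ell\in\{1,\ldots,|S_0|\}$, $i_\ell$ is the smallest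 $i$ with $|S_i|=\ell$. An $\ell\in\{1,\ldots,\lfloor|S_0|/2\rfloor\}$ is called bad if both $w_{i_{2\ell}}(B_{i_{2\ell}})\le 8\ell$ and $w_{i_\ell}(B_{i_\ell})>4\ell$; otherwise it is good. *)

theory Defs
  imports Main "HOL.Real"
begin

text \<open>A realization of the (1+eps)-adversarial sampling process on k elements.
  E i : the set E_i;  w i : the weights w_i;  x (Suc i) : the element e_{i+1} sampled in round i;
  p i : the adversary's distribution D_i^eps on E_i (chosen in round i).  When w_i(E_i) = 0 the distribution
  D_i is undefined; in that case we only require that the sampled element lies in E_i.\<close>

definition adv_process ::
  "real \<Rightarrow> nat \<Rightarrow> (nat \<Rightarrow> 'a set) \<Rightarrow> (nat \<Rightarrow> 'a \<Rightarrow> real)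
     \<Rightarrow> (nat \<Rightarrow> 'a \<Rightarrow> real) \<Rightarrow> (nat \<Rightarrow> 'a) \<Rightarrow> bool" where
  "adv_process eps k E w p x \<longleftrightarrow>
     finite (E 0) \<and> card (E 0) = k \<and>
     (\<forall>e\<in>E 0. 0 \<le> w 0 e) \<and>
     (\<forall>i<k.
        x (Suc i) \<in> E i \<and>
        E (Suc i) = E i - {x (Suc i)} \<and>
        (\<forall>e\<in>E (Suc i). 0 \<le> w (Suc i) e \<and> w (Suc i) e \<le> w i e) \<and>
        (sum (w i) (E i) > 0 \<longrightarrow>
           (\<forall>e\<in>E i. (1 - eps) * (w i e / sum (w i) (E i)) \<le> p i e \<and>
                     p i e \<le> (1 + eps) * (w i e / sum (w i) (E i))) \<and>
           sum (p i) (E i) = 1 \<and>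
           p i (x (Suc i)) > 0))"

definition Bset :: "(nat \<Rightarrow> 'a set) \<Rightarrow> (nat \<Rightarrow> 'a \<Rightarrow> real) \<Rightarrow> nat \<Rightarrow> 'a set" where
  "Bset E w i = {e \<in> E i. w i e \<ge> 80}"

definition Mset :: "(nat \<Rightarrow> 'a set) \<Rightarrow> (nat \<Rightarrow> 'a \<Rightarrow> real) \<Rightarrow> nat \<Rightarrow> 'a set" where
  "Mset E w i = {e \<in> E i. 2 < w i e \<and> w i e < 80}"

definition Sset :: "(nat \<Rightarrow> 'a set) \<Rightarrow> (nat \<Rightarrow> 'a \<Rightarrow> real) \<Rightarrow> nat \<Rightarrow> 'a set" where
  "Sset E w i = {e \<in> E i. w i e \<le> 2}"

definition first_idx :: "(nat \<Rightarrow> 'a set) \<Rightarrow> (nat \<Rightarrow> 'a \<Rightarrow> real) \<Rightarrow> nat \<Rightarrow> nat" where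
  "first_idx E w l = (LEAST i. card (Sset E w i) = l)"

definition is_bad :: "(nat \<Rightarrow> 'a set) \<Rightarrow> (nat \<Rightarrow> 'a \<Rightarrow> real) \<Rightarrow> nat \<Rightarrow> bool" where
  "is_bad E w l \<longleftrightarrow>
     1 \<le> l \<and> l \<le> card (Sset E w 0) div 2 \<and>
     sum (w (first_idx E w (2 * l))) (Bset E w (first_idx E w (2 * l))) \<le> 8 * real l \<and>
     sum (w (first_idx E w l)) (Bset E w (first_idx E w l)) > 4 * real l"

definition l_max :: "(nat \<Rightarrow> 'a set) \<Rightarrow> (nat \<Rightarrow> 'a \<Rightarrow> real) \<Rightarrow> nat" where
  "l_max E w = (if \<exists>l. is_bad E w l then Max {l. is_bad E w l} else 1)"

end

theory Submission
  imports Defs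
begin

text \<open>Only the monotonicity of the process matters, not the sampling probabilities.
  Write \<open>f l\<close> for the weight of the big elements at time \<open>i\<^sub>l\<close>. Since at most half of the
  initial elements can have weight above 2, \<open>f l \<le> k \<le> 2 |S\<^sub>0| < 4 l\<close> once \<open>2 l > |S\<^sub>0|\<close>;
  for every good \<open>l\<close> the bound \<open>f (2 l) \<le> 8 l\<close> propagates to \<open>f l \<le> 4 l\<close>. Halving down
  from the top therefore gives \<open>f l \<le> 4 l\<close> for all \<open>l > \<ell>\<^sub>m\<^sub>a\<^sub>x\<close>. At time \<open>i\<close> the small
  elements number at most \<open>k - i\<close>, so the big weight at time \<open>i\<close> is at most
  \<open>8 \<ell>\<^sub>m\<^sub>a\<^sub>x (k - i)\<close>, while the remaining elements weigh less than 80 each.\<close>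

lemma doubling_bound:
  fixes f :: "nat \<Rightarrow> real"
  assumes top: "\<And>l. l \<le> N \<Longrightarrow> f l \<le> 2 * real N"
    and halve: "\<And>l. L < l \<Longrightarrow> 2 * l \<le> N \<Longrightarrow> f (2 * l) \<le> 8 * real l \<Longrightarrow> f l \<le> 4 * real l"
    and "L < l" "l \<le> N"
  shows "f l \<le> 4 * real l"
  using assms(3,4)
proof (induction "N - l" arbitrary: l rule: less_induct)
  case less
  show ?case
  proof (cases "2 * l \<le> N")
    case True
    have "N - 2 * l < N - l" "L < 2 * l"
      using True less.prems by auto
    with True have "f (2 * l) \<le> 4 * real (2 * l)"
      by (intro less.hyps) auto
    with True less.prems show ?thesis
      by (intro halve) auto
  next
    case False
    with top[OF less.prems(2)] show ?thesis by linarith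
  qed
qed

lemma nat_seq_hits_intermediate:
  fixes s :: "nat \<Rightarrow> nat"
  assumes "\<And>j. j < i \<Longrightarrow> s j \<le> Suc (s (Suc j))" "l \<le> s 0" "s i \<le> l"
  shows "\<exists>j\<le>i. s j = l"
  using assms
proof (induction i)
  case 0
  then show ?case by auto
next
  case (Suc i)
  show ?case
  proof (cases "s i \<le> l")
    case True
    then have "\<exists>j\<le>i. s j = l"
      using Suc by (intro Suc.IH) auto
    then show ?thesis using le_SucI by blast
  next
    case False
    moreover have "s i \<le> Suc (s (Suc i))"
      using Suc.prems(1) by blast
    ultimately have "s (Suc i) = l"
      using Suc.prems(3) by linarith
    then show ?thesis by blast
  qed
qed

lemma finite_is_bad: "finite {l. is_bad E w l}"
  by (rule finite_subset[of _ "{..card (Sset E w 0)}"]) (auto simp: is_bad_def)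

lemma l_max_ge_1: "1 \<le> l_max E w"
proof (cases "\<exists>l. is_bad E w l")
  case True
  then obtain l where bad: "is_bad E w l" by blast
  then have "l \<le> l_max E w"
    using finite_is_bad by (auto simp: l_max_def intro: Max_ge)
  with bad show ?thesis by (simp add: is_bad_def)
qed (simp add: l_max_def)

lemma good_above_l_max:
  assumes "l_max E w < l"
  shows "\<not> is_bad E w l"
proof
  assume bad: "is_bad E w l"
  then have "l \<le> l_max E w"
    using finite_is_bad by (auto simp: l_max_def intro: Max_ge)
  with assms show False by simp
qed

lemma sum_le_80_card_plus_sum_Bset:
  assumes "finite (E i)"
  shows "sum (w i) (E i) \<le> 80 * real (card (E i)) + sum (w i) (Bset E w i)"
proof -
  have "sum (w i) (E i) = sum (w i) (E i - Bset E w i) + sum (w i) (Bset E w i)"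
    using assms by (intro sum.subset_diff) (auto simp: Bset_def)
  also have "sum (w i) (E i - Bset E w i) \<le> (\<Sum>_\<in>E i - Bset E w i. 80)"
    by (intro sum_mono) (auto simp: Bset_def)
  also have "\<dots> \<le> 80 * real (card (E i))"
    using assms by (simp add: card_mono)
  finally show ?thesis by simp
qed

locale adversarial_sampling =
  fixes eps :: real and k :: nat and E :: "nat \<Rightarrow> 'a set"
    and w p :: "nat \<Rightarrow> 'a \<Rightarrow> real" and x :: "nat \<Rightarrow> 'a"
  assumes process: "adv_process eps k E w p x"
begin

abbreviation big_weight :: "nat \<Rightarrow> real" where
  "big_weight i \<equiv> sum (w i) (Bset E w i)"

lemma process_step:
  assumes "i < k"
  shows "E (Suc i) = E i - {x (Suc i)}"
    and "e \<in> E (Suc i) \<Longrightarrow> 0 \<le> w (Suc i) e \<and> w (Suc i) e \<le> w i e"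
  using process assms by (auto simp: adv_process_def)

lemma E_antimono:
  assumes "i \<le> j" "j \<le> k"
  shows "E j \<subseteq> E i"
  using assms
proof (induction j rule: dec_induct)
  case (step j)
  then show ?case using process_step(1)[of j] by auto
qed simp

lemma weight_antimono:
  assumes "i \<le> j" "j \<le> k" "e \<in> E j"
  shows "w j e \<le> w i e"
  using assms
proof (induction j rule: dec_induct)
  case (step j)
  then have "e \<in> E j" "w (Suc j) e \<le> w j e"
    using process_step(1,2)[of j] by auto
  with step show ?case by fastforce
qed simp

lemma finite_E: "i \<le> k \<Longrightarrow> finite (E i)"
  using E_antimono[of 0 i] process by (auto simp: adv_process_def intro: finite_subset)

lemma weight_nonneg: "i \<le> k \<Longrightarrow> e \<in> E i \<Longrightarrow> 0 \<le> w i e"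
  using process process_step(2) by (cases i) (auto simp: adv_process_def)

lemma card_E: "i \<le> k \<Longrightarrow> card (E i) = k - i"
proof (induction i)
  case (Suc i)
  then show ?case
    using process_step(1)[of i] finite_E[of i] process
    by (auto simp: card_Diff_singleton_if adv_process_def)
qed (use process in \<open>simp add: adv_process_def\<close>)

lemma E_final: "E k = {}"
  using card_E[of k] finite_E[of k] by simp

lemma big_weight_antimono:
  assumes "i \<le> j" "j \<le> k"
  shows "big_weight j \<le> big_weight i"
proof -
  have "big_weight j \<le> sum (w i) (Bset E w j)"
    using weight_antimono[OF assms] by (intro sum_mono) (auto simp: Bset_def)
  also have "\<dots> \<le> big_weight i"
    using E_antimono[OF assms] weight_antimono[OF assms] finite_E[of i] assms
    by (intro sum_mono2) (force simp: Bset_def)+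
  finally show ?thesis .
qed

lemma card_Sset_step:
  assumes "i < k"
  shows "card (Sset E w i) \<le> Suc (card (Sset E w (Suc i)))"
proof -
  have "Sset E w i - {x (Suc i)} \<subseteq> Sset E w (Suc i)"
    using process_step[OF assms] by (force simp: Sset_def)
  then have "card (Sset E w i - {x (Suc i)}) \<le> card (Sset E w (Suc i))"
    using finite_E[of "Suc i"] assms by (intro card_mono) (auto simp: Sset_def)
  then show ?thesis by (simp add: card_Diff_singleton_if split: if_splits)
qed

lemma first_idx_le:
  assumes "l \<le> card (Sset E w 0)" "i \<le> k" "card (Sset E w i) \<le> l"
  shows "first_idx E w l \<le> i"
proof -
  obtain j where "j \<le> i" "card (Sset E w j) = l"
    using nat_seq_hits_intermediate[of i "\<lambda>j. card (Sset E w j)"] card_Sset_step assms by force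
  then show ?thesis
    unfolding first_idx_def by (auto intro: Least_le order.trans)
qed

lemma first_idx_le_k:
  assumes "l \<le> card (Sset E w 0)"
  shows "first_idx E w l \<le> k"
  using first_idx_le[OF assms, of k] E_final by (simp add: Sset_def)

end

locale normalized_adversarial_sampling = adversarial_sampling +
  assumes normalized: "sum (w 0) (E 0) = real k"
begin

lemma k_le_twice_card_Sset_0: "real k \<le> 2 * real (card (Sset E w 0))"
proof -
  define T where "T = E 0 - Sset E w 0"
  have "2 * real (card T) = (\<Sum>_\<in>T. 2)" by simp
  also have "\<dots> \<le> sum (w 0) T"
    by (intro sum_mono) (auto simp: T_def Sset_def)
  also have "\<dots> \<le> sum (w 0) (E 0)"
    using finite_E[of 0] weight_nonneg[of 0] by (intro sum_mono2) (auto simp: T_def)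
  finally have "2 * real (card T) \<le> real k" by (simp add: normalized)
  moreover have "card T = k - card (Sset E w 0)" "card (Sset E w 0) \<le> k"
    using finite_E[of 0] card_E[of 0] card_mono[of "E 0" "Sset E w 0"]
    unfolding T_def by (auto simp: card_Diff_subset Sset_def)
  ultimately show ?thesis by linarith
qed

lemma big_weight_le_k:
  assumes "i \<le> k"
  shows "big_weight i \<le> real k"
proof -
  have "big_weight i \<le> big_weight 0"
    using big_weight_antimono assms by simp
  also have "\<dots> \<le> sum (w 0) (E 0)"
    using finite_E[of 0] weight_nonneg[of 0] by (intro sum_mono2) (auto simp: Bset_def)
  finally show ?thesis by (simp add: normalized)
qed

lemma big_weight_first_idx_above_l_max:
  assumes "l_max E w < l" "l \<le> card (Sset E w 0)"
  shows "big_weight (first_idx E w l) \<le> 4 * real l"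
proof (rule doubling_bound[where N = "card (Sset E w 0)" and L = "l_max E w", OF _ _ assms])
  fix l
  assume "l \<le> card (Sset E w 0)"
  then have "big_weight (first_idx E w l) \<le> real k"
    by (intro big_weight_le_k first_idx_le_k)
  then show "big_weight (first_idx E w l) \<le> 2 * real (card (Sset E w 0))"
    using k_le_twice_card_Sset_0 by linarith
next
  fix l
  assume "l_max E w < l" "2 * l \<le> card (Sset E w 0)"
    and "big_weight (first_idx E w (2 * l)) \<le> 8 * real l"
  moreover from this have "\<not> is_bad E w l"
    by (intro good_above_l_max)
  ultimately show "big_weight (first_idx E w l) \<le> 4 * real l"
    using l_max_ge_1[of E w] by (auto simp: is_bad_def)
qed

lemma big_weight_le:
  assumes "i \<le> k" "l_max E w < m" "card (Sset E w i) \<le> m"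
  shows "big_weight i \<le> 4 * real m"
proof (cases "m \<le> card (Sset E w 0)")
  case True
  then have "first_idx E w m \<le> i"
    using assms by (intro first_idx_le)
  then have "big_weight i \<le> big_weight (first_idx E w m)"
    using assms by (intro big_weight_antimono)
  also have "\<dots> \<le> 4 * real m"
    using True assms by (intro big_weight_first_idx_above_l_max)
  finally show ?thesis .
next
  case False
  then show ?thesis
    using big_weight_le_k[OF assms(1)] k_le_twice_card_Sset_0 by simp
qed

lemma total_weight_le:
  assumes "i < k"
  shows "sum (w i) (E i) \<le> 90 * real (l_max E w) * (real k - real i)"
proof -
  define L where "L = l_max E w"
  define n where "n = k - i"
  have "1 \<le> L" "1 \<le> n"
    using l_max_ge_1[of E w] assms by (auto simp: L_def n_def)
  have card: "card (E i) = n"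
    using card_E[of i] assms by (simp add: n_def)
  then have "card (Sset E w i) \<le> n"
    using card_mono[OF finite_E[of i], of "Sset E w i"] assms by (auto simp: Sset_def)
  also have "n \<le> 2 * L * n"
    using \<open>1 \<le> L\<close> by simp
  finally have "big_weight i \<le> 4 * real (2 * L * n)"
    using \<open>1 \<le> L\<close> \<open>1 \<le> n\<close> assms
    by (intro big_weight_le) (auto simp: L_def intro: less_le_trans[of L "2 * L"])
  then have "sum (w i) (E i) \<le> 80 * real n + 8 * real L * real n"
    using sum_le_80_card_plus_sum_Bset[of E i w] finite_E[of i] assms card by simp
  also have "\<dots> \<le> 90 * real L * real n"
    using \<open>1 \<le> L\<close> \<open>1 \<le> n\<close> by (simp add: algebra_simps)
  finally show ?thesis
    using assms by (simp add: L_def n_def of_nat_diff)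
qed

end

theorem lemma3:
  fixes eps :: real and k :: nat and E :: "nat \<Rightarrow> 'a set"
    and w p :: "nat \<Rightarrow> 'a \<Rightarrow> real" and x :: "nat \<Rightarrow> 'a"
  assumes "0 < eps" and "eps < 1 / 2"
    and "adv_process eps k E w p x"
    and "sum (w 0) (E 0) = real k"
    and "i < k"
  shows "sum (w i) (E i) / (real k - real i) \<le> 90 * real (l_max E w)"
proof -
  interpret normalized_adversarial_sampling eps k E w p x
    using assms(3,4) by unfold_locales
  have "0 < real k - real i"
    using assms(5) by simp
  then show ?thesis
    using total_weight_le[OF assms(5)] by (simp add: pos_divide_le_eq mult.commute)
qed

end
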